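(* Let $A$ be a synaptic algebra and $p,q\in P$. With $r_p:=p\wedge(p^{\perp}\vee q)\wedge(p^{\perp}\vee q^{\perp})$, $r_{p^{\perp}}:=p^{\perp}\wedge(p\vee q)\wedge(p\vee q^{\perp})$, $r_q:=q\wedge(p\vee q^{\perp})\wedge(p^{\perp}\vee q^{\perp})$, $r_{q^{\perp}}:=q^{\perp}\wedge(p\vee q)\wedge(p^{\perp}\vee q)$ and $[p,q]:=(p\vee q)\wedge(p\vee q^{\perp})\wedge(p^{\perp}\vee q)\wedge(p^{\perp}\vee q^{\perp})$: (i) $r_p\perp r_{p^{\perp}}$ and $r_q\perp r_{q^{\perp}}$; (ii) $1=(p\wedge q)\oplus(p\wedge q^{\perp})\oplus(p^{\perp}\wedge q)\oplus(p^{\perp}\wedge q^{\perp})\oplus r_p\oplus r_{p^{\perp}}=[p,q]^{\perp}\oplus r_p\oplus r_{p^{\perp}}$; (iii) $1=(p\wedge q)\oplus(p\wedge q^{\perp})\oplus(p^{\perp}\wedge q)\oplus(p^{\perp}\wedge q^{\perp})\oplus r_q\oplus r_{q^{\perp}}=[p,q]^{\perp}\oplus r_q\oplus r_{q^{\perp}}$; (iv) $r_p\oplus r_{p^{\perp}}=r_q\oplus r_{q^{\perp}}=[p,q]$.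
   Context: Synaptic algebra (Foulis): $R$ is a real linear associative algebra with unit $1$, and $A\subseteq R$ is a real linear subspace with $1\in A$. For $a,b\in A$ write $aCb$ iff $ab=ba$; $C(a):=\{b\in A: aCb\}$; $CC(a):=\{b\in A: bCd \text{ for all } d\in C(a)\}$. $A$ is a synaptic algebra with enveloping algebra $R$ iff: (SA1) $A$ is a partially ordered archimedean real linear space with positive cone $A^+$, $1$ is an order unit, $\|\cdot\|$ the order-unit norm; (SA2) $a\in A\Rightarrow a^2\in A^+$; (SA3) $a,b\in A^+\Rightarrow aba\in A^+$; (SA4) if $a\in A$, $b\in A^+$, $aba=0$ then $ab=ba=0$; (SA5) if $a\in A^+$ there is $b\in A^+\cap CC(a)$ with $b^2=a$; (SA6) for $a\in A$ there is $p=p^2\in A$ with $ab=0\Leftrightarrow pb=0$ for all $b\in A$; (SA7) if $1\le a$ there is $b\in A$ with $ab=ba=1$; (SA8) if $a,b\in A$, $a_1\le a_2\le\cdots$ are pairwise commuting elements of $C(b)$ with $\|a-a_n\|\to0$, then $a\in C(b)$. $A$ is nondegenerate. $P:=\{p\in A:p=p^2\}$ with the order inherited from $A$ is an orthomodular lattice with orthocomplement $p^{\perp}:=1-p$, meet $\wedge$, join $\vee$. $p\perp q$ means $p\le q^{\perp}$; for pairwise orthogonal projections the orthosum $\oplus$ is their sum. *)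

theory Defs
  imports Complex_Main
begin

text \<open>A synaptic algebra is represented by a set A of elements of the enveloping
  real unital associative algebra 'r, together with its positive cone Pos.\<close>

definition sa_le :: "'r::real_algebra_1 set \<Rightarrow> 'r \<Rightarrow> 'r \<Rightarrow> bool" where
  "sa_le Pos a b \<longleftrightarrow> b - a \<in> Pos"

definition sa_comm :: "'r::real_algebra_1 set \<Rightarrow> 'r \<Rightarrow> 'r set" where
  "sa_comm A a = {b \<in> A. a * b = b * a}"

definition sa_bicomm :: "'r::real_algebra_1 set \<Rightarrow> 'r \<Rightarrow> 'r set" where
  "sa_bicomm A a = {b \<in> A. \<forall>d \<in> sa_comm A a. b * d = d * b}"

definition sa_norm :: "'r::real_algebra_1 set \<Rightarrow> 'r \<Rightarrow> real" where
  "sa_norm Pos a = Inf {l::real. 0 < l \<and> sa_le Pos (- (l *\<^sub>R 1)) a \<and> sa_le Pos a (l *\<^sub>R 1)}"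

definition synaptic_algebra :: "'r::real_algebra_1 set \<Rightarrow> 'r set \<Rightarrow> bool" where
  "synaptic_algebra A Pos \<longleftrightarrow>
    \<comment> \<open>A is a real linear subspace containing 1\<close>
    0 \<in> A \<and> 1 \<in> A \<and> (\<forall>a\<in>A. \<forall>b\<in>A. a + b \<in> A) \<and> (\<forall>c::real. \<forall>a\<in>A. c *\<^sub>R a \<in> A) \<and>
    \<comment> \<open>(SA1) partially ordered (positive cone), archimedean, 1 an order unit\<close>
    Pos \<subseteq> A \<and> (\<forall>a\<in>Pos. \<forall>b\<in>Pos. a + b \<in> Pos) \<and> (\<forall>c::real. \<forall>a\<in>Pos. 0 \<le> c \<longrightarrow> c *\<^sub>R a \<in> Pos) \<and>
    (\<forall>a. a \<in> Pos \<and> - a \<in> Pos \<longrightarrow> a = 0) \<and>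
    (\<forall>a\<in>A. \<forall>b\<in>A. (\<forall>n::nat. sa_le Pos (of_nat n *\<^sub>R a) b) \<longrightarrow> sa_le Pos a 0) \<and>
    (\<forall>a\<in>A. \<exists>n::nat. sa_le Pos a (of_nat n *\<^sub>R 1)) \<and>
    \<comment> \<open>(SA2)\<close>
    (\<forall>a\<in>A. a * a \<in> Pos) \<and>
    \<comment> \<open>(SA3)\<close>
    (\<forall>a\<in>Pos. \<forall>b\<in>Pos. a * b * a \<in> Pos) \<and>
    \<comment> \<open>(SA4)\<close>
    (\<forall>a\<in>A. \<forall>b\<in>Pos. a * b * a = 0 \<longrightarrow> a * b = 0 \<and> b * a = 0) \<and>
    \<comment> \<open>(SA5)\<close>
    (\<forall>a\<in>Pos. \<exists>b\<in>Pos \<inter> sa_bicomm A a. b * b = a) \<and>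
    \<comment> \<open>(SA6)\<close>
    (\<forall>a\<in>A. \<exists>p\<in>A. p * p = p \<and> (\<forall>b\<in>A. a * b = 0 \<longleftrightarrow> p * b = 0)) \<and>
    \<comment> \<open>(SA7)\<close>
    (\<forall>a\<in>A. sa_le Pos 1 a \<longrightarrow> (\<exists>b\<in>A. a * b = 1 \<and> b * a = 1)) \<and>
    \<comment> \<open>(SA8)\<close>
    (\<forall>a\<in>A. \<forall>b\<in>A. \<forall>s::nat \<Rightarrow> 'r.
        (\<forall>n. s n \<in> sa_comm A b) \<and> (\<forall>m n. s m * s n = s n * s m) \<and>
        (\<forall>n. sa_le Pos (s n) (s (Suc n))) \<and>
        (\<lambda>n. sa_norm Pos (a - s n)) \<longlonglongrightarrow> 0
        \<longrightarrow> a \<in> sa_comm A b)"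

definition sa_proj :: "'r::real_algebra_1 set \<Rightarrow> 'r set" where
  "sa_proj A = {p \<in> A. p * p = p}"

definition sa_perp :: "'r::real_algebra_1 \<Rightarrow> 'r" where
  "sa_perp p = 1 - p"

definition sa_meet :: "'r::real_algebra_1 set \<Rightarrow> 'r set \<Rightarrow> 'r \<Rightarrow> 'r \<Rightarrow> 'r" where
  "sa_meet A Pos p q = (THE r. r \<in> sa_proj A \<and> sa_le Pos r p \<and> sa_le Pos r q \<and>
      (\<forall>s\<in>sa_proj A. sa_le Pos s p \<and> sa_le Pos s q \<longrightarrow> sa_le Pos s r))"

definition sa_join :: "'r::real_algebra_1 set \<Rightarrow> 'r set \<Rightarrow> 'r \<Rightarrow> 'r \<Rightarrow> 'r" where
  "sa_join A Pos p q = (THE r. r \<in> sa_proj A \<and> sa_le Pos p r \<and> sa_le Pos q r \<and>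
      (\<forall>s\<in>sa_proj A. sa_le Pos p s \<and> sa_le Pos q s \<longrightarrow> sa_le Pos r s))"

definition sa_orth :: "'r::real_algebra_1 set \<Rightarrow> 'r \<Rightarrow> 'r \<Rightarrow> bool" where
  "sa_orth Pos p q \<longleftrightarrow> sa_le Pos p (sa_perp q)"

definition sa_orthosum :: "'r::real_algebra_1 set \<Rightarrow> 'r list \<Rightarrow> 'r \<Rightarrow> bool" where
  "sa_orthosum Pos xs x \<longleftrightarrow>
     (\<forall>i<length xs. \<forall>j<length xs. i \<noteq> j \<longrightarrow> sa_orth Pos (xs ! i) (xs ! j)) \<and> sum_list xs = x"

end

theory Submission
  imports Defs
begin

text \<open>The join of two projections x, y exists: it is the carrier (the projection of SA6)
  of x + y, and meets are obtained by De Morgan. A projection commuting with an element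
  commutes with its carrier, hence with joins and meets of projections it commutes with.
  Writing p' = 1 - p, the projection p lies below two of the four joins whose meet is [p,q]
  and p' below the other two, so [p,q] commutes with p, and likewise with q. Each r-projection
  is the meet of [p,q] with p, p', q or q', and meets of commuting projections are products:
  r_p = [p,q] p and r_p' = [p,q] p' are orthogonal with sum [p,q]. Finally each of the four
  joins is the complement of one of the pairwise orthogonal meets p \<and> q, ..., p' \<and> q', and the
  meet of complements of orthogonal projections is the complement of their sum, so [p,q]' is
  the sum of these four meets.\<close>

locale synaptic =
  fixes A Pos :: "'r::real_algebra_1 set"
  assumes synaptic_algebra: "synaptic_algebra A Pos"
begin

lemma one_mem: "1 \<in> A"
  using synaptic_algebra by (simp add: synaptic_algebra_def)

lemma add_mem: "a \<in> A \<Longrightarrow> b \<in> A \<Longrightarrow> a + b \<in> A"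
  using synaptic_algebra by (simp add: synaptic_algebra_def)

lemma scaleR_mem: "a \<in> A \<Longrightarrow> c *\<^sub>R a \<in> A"
  using synaptic_algebra by (simp add: synaptic_algebra_def)

lemma pos_subset: "Pos \<subseteq> A"
  using synaptic_algebra by (simp add: synaptic_algebra_def)

lemma pos_add: "a \<in> Pos \<Longrightarrow> b \<in> Pos \<Longrightarrow> a + b \<in> Pos"
  using synaptic_algebra by (simp add: synaptic_algebra_def)

lemma pos_antisym: "a \<in> Pos \<Longrightarrow> - a \<in> Pos \<Longrightarrow> a = 0"
  using synaptic_algebra by (simp add: synaptic_algebra_def)

lemma pos_add_eq_zero:
  assumes "a \<in> Pos" "b \<in> Pos" "a + b = 0"
  shows "a = 0" "b = 0"
proof -
  have "- a = b" "- b = a" using \<open>a + b = 0\<close> by (simp_all add: add_eq_0_iff2 add_eq_0_iff)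
  then show "a = 0" "b = 0" using pos_antisym assms(1,2) by simp_all
qed

lemma square_pos: "a \<in> A \<Longrightarrow> a * a \<in> Pos"
  using synaptic_algebra by (simp add: synaptic_algebra_def)

lemma sandwich_pos: "a \<in> Pos \<Longrightarrow> b \<in> Pos \<Longrightarrow> a * b * a \<in> Pos"
  using synaptic_algebra by (simp add: synaptic_algebra_def)

lemma sandwich_zero: "a \<in> A \<Longrightarrow> b \<in> Pos \<Longrightarrow> a * b * a = 0 \<Longrightarrow> a * b = 0 \<and> b * a = 0"
  using synaptic_algebra by (simp add: synaptic_algebra_def)

lemma annihilator_proj_exists:
  "a \<in> A \<Longrightarrow> \<exists>e\<in>A. e * e = e \<and> (\<forall>b\<in>A. a * b = 0 \<longleftrightarrow> e * b = 0)"
  using synaptic_algebra by (simp add: synaptic_algebra_def)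

lemma diff_mem: "a \<in> A \<Longrightarrow> b \<in> A \<Longrightarrow> a - b \<in> A"
  using add_mem[of a "(-1) *\<^sub>R b"] scaleR_mem[of b "-1"] by simp

abbreviation P where "P \<equiv> sa_proj A"
abbreviation le where "le \<equiv> sa_le Pos"
abbreviation meet where "meet \<equiv> sa_meet A Pos"
abbreviation join where "join \<equiv> sa_join A Pos"

lemma proj_iff: "p \<in> P \<longleftrightarrow> p \<in> A \<and> p * p = p"
  by (simp add: sa_proj_def)

lemma proj_mem: "p \<in> P \<Longrightarrow> p \<in> A"
  by (simp add: proj_iff)

lemma proj_idem: "p \<in> P \<Longrightarrow> p * p = p"
  by (simp add: proj_iff)

lemma proj_pos: "p \<in> P \<Longrightarrow> p \<in> Pos"
  using square_pos by (force simp: proj_iff)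

lemma perp_proj: "p \<in> P \<Longrightarrow> 1 - p \<in> P"
  by (auto simp: proj_iff diff_mem one_mem algebra_simps)

lemma sa_le_trans: "le a b \<Longrightarrow> le b c \<Longrightarrow> le a c"
  unfolding sa_le_def using pos_add by fastforce

lemma sa_le_antisym: "le a b \<Longrightarrow> le b a \<Longrightarrow> a = b"
  unfolding sa_le_def using pos_antisym[of "b - a"] by simp

lemma sa_le_perp_iff: "le (1 - b) (1 - a) \<longleftrightarrow> le a b"
  unfolding sa_le_def by simp

lemma sa_le_perp_left: "le (1 - a) b \<longleftrightarrow> le (1 - b) a"
  unfolding sa_le_def by (simp add: algebra_simps)

lemma sa_le_perp_right: "le a (1 - b) \<longleftrightarrow> le b (1 - a)"
  unfolding sa_le_def by (simp add: algebra_simps)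

lemma proj_mult_eq_left_iff_right:
  assumes p: "p \<in> P" and q: "q \<in> P"
  shows "p * q = p \<longleftrightarrow> q * p = p"
proof -
  have q': "1 - q \<in> A" using perp_proj[OF q] by (rule proj_mem)
  have expand: "(1 - q) * p * (1 - q) = (p - q * p) - (p * q - q * (p * q))"
    by (simp add: algebra_simps)
  have "(1 - q) * p * (1 - q) = 0" if "p * q = p \<or> q * p = p"
    using that
  proof
    assume "p * q = p"
    then show ?thesis by (simp add: expand)
  next
    assume "q * p = p"
    then have "q * (p * q) = p * q" by (simp flip: mult.assoc)
    with \<open>q * p = p\<close> show ?thesis by (simp add: expand)
  qed
  then have "(1 - q) * p = 0 \<and> p * (1 - q) = 0" if "p * q = p \<or> q * p = p"
    using that sandwich_zero[OF q' proj_pos[OF p]] by blast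
  then show ?thesis by (auto simp: algebra_simps)
qed

lemma proj_le_iff:
  assumes p: "p \<in> P" and q: "q \<in> P"
  shows "le p q \<longleftrightarrow> p * q = p"
proof
  assume "le p q"
  then have "q - p \<in> Pos" by (simp add: sa_le_def)
  then have "(1 - q) * (q - p) * (1 - q) \<in> Pos"
    using sandwich_pos proj_pos[OF perp_proj[OF q]] by blast
  moreover have "(1 - q) * (q - p) * (1 - q) = - ((1 - q) * p * (1 - q))"
    using proj_idem[OF q] by (simp add: algebra_simps)
  moreover have "(1 - q) * p * (1 - q) \<in> Pos"
    using sandwich_pos proj_pos perp_proj p q by blast
  ultimately have "(1 - q) * p * (1 - q) = 0"
    using pos_antisym by simp
  then have "p * (1 - q) = 0"
    using sandwich_zero proj_mem[OF perp_proj[OF q]] proj_pos[OF p] by blast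
  then show "p * q = p" by (simp add: algebra_simps)
next
  assume pq: "p * q = p"
  then have qp: "q * p = p" using proj_mult_eq_left_iff_right p q by blast
  have "(q - p) * (q - p) = q - p"
    using pq qp proj_idem[OF p] proj_idem[OF q] by (simp add: algebra_simps)
  then show "le p q"
    using square_pos[OF diff_mem[OF proj_mem[OF q] proj_mem[OF p]]] by (simp add: sa_le_def)
qed

lemma proj_le_iff':
  "p \<in> P \<Longrightarrow> q \<in> P \<Longrightarrow> le p q \<longleftrightarrow> q * p = p"
  using proj_le_iff proj_mult_eq_left_iff_right by blast

lemma proj_le_refl: "p \<in> P \<Longrightarrow> le p p"
  by (simp add: proj_le_iff proj_idem)

lemma proj_eqI:
  assumes "x \<in> P" "y \<in> P" "\<And>s. s \<in> P \<Longrightarrow> le s x \<longleftrightarrow> le s y"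
  shows "x = y"
  using assms proj_le_refl sa_le_antisym by metis

lemma proj_commute_if_le: "p \<in> P \<Longrightarrow> q \<in> P \<Longrightarrow> le p q \<Longrightarrow> p * q = q * p"
  using proj_le_iff proj_le_iff' by metis

lemma proj_commute_if_perp_le:
  assumes "p \<in> P" "q \<in> P" "le (1 - p) q"
  shows "p * q = q * p"
proof -
  have "(1 - p) * q = q * (1 - p)"
    using proj_commute_if_le perp_proj assms by blast
  then show ?thesis by (simp add: algebra_simps)
qed

lemma proj_orth_commute:
  assumes x: "x \<in> P" and y: "y \<in> P" and "x * y = 0"
  shows "y * x = 0"
proof -
  have "x * (1 - y) = x" using \<open>x * y = 0\<close> by (simp add: algebra_simps)
  then have "(1 - y) * x = x" using proj_mult_eq_left_iff_right x perp_proj[OF y] by blast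
  then show ?thesis by (simp add: algebra_simps)
qed

lemma sa_orthI:
  assumes "x \<in> P" "y \<in> P" "x * y = 0"
  shows "sa_orth Pos x y"
proof -
  have "x * (1 - y) = x" using \<open>x * y = 0\<close> by (simp add: algebra_simps)
  then show ?thesis
    unfolding sa_orth_def sa_perp_def using proj_le_iff assms perp_proj by blast
qed

lemma proj_mult_zero_if_le_perp:
  assumes "x \<in> P" "y \<in> P" "z \<in> P" "le x y" "le z (1 - y)"
  shows "x * z = 0"
proof -
  have "x = x * y" "z = (1 - y) * z"
    using assms perp_proj proj_le_iff proj_le_iff' by metis+
  then have "x * z = x * (y * (1 - y)) * z" by (metis mult.assoc)
  also have "y * (1 - y) = 0" using proj_idem[OF \<open>y \<in> P\<close>] by (simp add: algebra_simps)
  finally show ?thesis by simp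
qed

lemma proj_add_orth:
  assumes x: "x \<in> P" and y: "y \<in> P" and "x * y = 0"
  shows "x + y \<in> P"
  using assms proj_orth_commute[OF assms] add_mem[OF proj_mem[OF x] proj_mem[OF y]]
  by (simp add: proj_iff proj_idem algebra_simps)

lemma proj_mult_commuting:
  assumes c: "c \<in> P" and x: "x \<in> P" and "c * x = x * c"
  shows "c * x \<in> P"
proof -
  have "x * c * x = c * x"
    using assms proj_idem[OF x] by (metis mult.assoc)
  then have "c * x \<in> Pos" using sandwich_pos proj_pos c x by metis
  moreover have "c * x * (c * x) = c * x"
    using assms proj_idem[OF x] proj_idem[OF c] by (metis mult.assoc)
  ultimately show ?thesis using pos_subset by (auto simp: proj_iff)
qed

definition is_carrier :: "'r \<Rightarrow> 'r \<Rightarrow> bool" where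
  "is_carrier a e \<longleftrightarrow> e \<in> P \<and> (\<forall>b\<in>A. a * b = 0 \<longleftrightarrow> e * b = 0)"

lemma carrier_exists: "a \<in> A \<Longrightarrow> \<exists>e. is_carrier a e"
  using annihilator_proj_exists by (auto simp: is_carrier_def proj_iff)

lemma carrier_mult_perp:
  assumes "is_carrier a e"
  shows "a * (1 - e) = 0"
proof -
  have e: "e \<in> P" using assms by (simp add: is_carrier_def)
  have "e * (1 - e) = 0" using proj_idem[OF e] by (simp add: algebra_simps)
  then show ?thesis
    using assms diff_mem[OF one_mem proj_mem[OF e]] by (simp add: is_carrier_def)
qed

lemma join_eqI:
  assumes "r \<in> P" "le x r" "le y r" "\<And>s. s \<in> P \<Longrightarrow> le x s \<Longrightarrow> le y s \<Longrightarrow> le r s"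
  shows "join x y = r"
  unfolding sa_join_def using assms by (blast intro: the_equality sa_le_antisym)

lemma meet_eqI:
  assumes "r \<in> P" "le r x" "le r y" "\<And>s. s \<in> P \<Longrightarrow> le s x \<Longrightarrow> le s y \<Longrightarrow> le s r"
  shows "meet x y = r"
  unfolding sa_meet_def using assms by (blast intro: the_equality sa_le_antisym)

lemma carrier_sum_lub:
  assumes x: "x \<in> P" and y: "y \<in> P" and e: "is_carrier (x + y) e"
  shows "le x e" "le y e" "\<And>s. s \<in> P \<Longrightarrow> le x s \<Longrightarrow> le y s \<Longrightarrow> le e s"
proof -
  have eP: "e \<in> P" and ann: "\<And>b. b \<in> A \<Longrightarrow> (x + y) * b = 0 \<longleftrightarrow> e * b = 0"
    using e by (auto simp: is_carrier_def)
  have ne: "1 - e \<in> A" using proj_mem[OF perp_proj[OF eP]] .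
  have "(1 - e) * x * (1 - e) + (1 - e) * y * (1 - e) = (1 - e) * ((x + y) * (1 - e))"
    by (simp add: algebra_simps)
  also have "\<dots> = 0" using carrier_mult_perp[OF e] by simp
  finally have sum0: "(1 - e) * x * (1 - e) + (1 - e) * y * (1 - e) = 0" .
  have "(1 - e) * x * (1 - e) \<in> Pos" "(1 - e) * y * (1 - e) \<in> Pos"
    using sandwich_pos proj_pos perp_proj eP x y by blast+
  then have "(1 - e) * x * (1 - e) = 0" "(1 - e) * y * (1 - e) = 0"
    using pos_add_eq_zero sum0 by blast+
  then have "(1 - e) * x = 0" "(1 - e) * y = 0"
    using sandwich_zero[OF ne] proj_pos x y by blast+
  then have "e * x = x" "e * y = y" by (simp_all add: algebra_simps)
  then show "le x e" "le y e" using proj_le_iff' x y eP by blast+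
  fix s assume s: "s \<in> P" "le x s" "le y s"
  then have "x * s = x" "y * s = y" using proj_le_iff x y by blast+
  then have "(x + y) * (1 - s) = 0" by (simp add: algebra_simps)
  then have "e * (1 - s) = 0" using ann proj_mem[OF perp_proj[OF s(1)]] by blast
  then have "e * s = e" by (simp add: algebra_simps)
  then show "le e s" using proj_le_iff eP s(1) by blast
qed

lemma join_eq_carrier:
  assumes "x \<in> P" "y \<in> P" "is_carrier (x + y) e"
  shows "join x y = e"
  using assms carrier_sum_lub[OF assms] by (intro join_eqI) (auto simp: is_carrier_def)

lemma join_lub:
  assumes x: "x \<in> P" and y: "y \<in> P"
  shows "join x y \<in> P" "le x (join x y)" "le y (join x y)"
    "\<And>s. s \<in> P \<Longrightarrow> le x s \<Longrightarrow> le y s \<Longrightarrow> le (join x y) s"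
proof -
  obtain e where e: "is_carrier (x + y) e"
    using carrier_exists add_mem proj_mem x y by metis
  note join_eq_carrier[OF x y e]
  then show "join x y \<in> P" "le x (join x y)" "le y (join x y)"
    "\<And>s. s \<in> P \<Longrightarrow> le x s \<Longrightarrow> le y s \<Longrightarrow> le (join x y) s"
    using carrier_sum_lub[OF x y e] e by (auto simp: is_carrier_def)
qed

lemmas join_proj = join_lub(1)

lemma le_joinI1: "x \<in> P \<Longrightarrow> y \<in> P \<Longrightarrow> le s x \<Longrightarrow> le s (join x y)"
  using join_lub(2) sa_le_trans by blast

lemma le_joinI2: "x \<in> P \<Longrightarrow> y \<in> P \<Longrightarrow> le s y \<Longrightarrow> le s (join x y)"
  using join_lub(3) sa_le_trans by blast

lemma meet_eq_perp_join:
  assumes x: "x \<in> P" and y: "y \<in> P"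
  shows "meet x y = 1 - join (1 - x) (1 - y)"
proof (rule meet_eqI)
  let ?j = "join (1 - x) (1 - y)"
  note J = join_lub[OF perp_proj[OF x] perp_proj[OF y]]
  show "1 - ?j \<in> P" using J(1) perp_proj by blast
  show "le (1 - ?j) x" "le (1 - ?j) y" using J(2,3) by (simp_all add: sa_le_perp_left)
  fix s assume "s \<in> P" "le s x" "le s y"
  then have "le ?j (1 - s)" using J(4) sa_le_perp_iff perp_proj by blast
  then show "le s (1 - ?j)" by (simp add: sa_le_perp_right)
qed

lemma join_eq_perp_meet:
  "x \<in> P \<Longrightarrow> y \<in> P \<Longrightarrow> join x y = 1 - meet (1 - x) (1 - y)"
  by (simp add: meet_eq_perp_join perp_proj)

lemma meet_proj: "x \<in> P \<Longrightarrow> y \<in> P \<Longrightarrow> meet x y \<in> P"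
  by (simp add: meet_eq_perp_join perp_proj join_proj)

lemma le_meet_iff:
  assumes x: "x \<in> P" and y: "y \<in> P" and s: "s \<in> P"
  shows "le s (meet x y) \<longleftrightarrow> le s x \<and> le s y"
proof -
  let ?j = "join (1 - x) (1 - y)"
  have "le s (meet x y) \<longleftrightarrow> le ?j (1 - s)"
    by (simp add: meet_eq_perp_join[OF x y] sa_le_perp_right)
  also have "\<dots> \<longleftrightarrow> le (1 - x) (1 - s) \<and> le (1 - y) (1 - s)"
    using join_lub[OF perp_proj[OF x] perp_proj[OF y]] perp_proj[OF s] sa_le_trans by blast
  finally show ?thesis by (simp add: sa_le_perp_iff)
qed

lemma meet_lower:
  assumes "x \<in> P" "y \<in> P"
  shows "le (meet x y) x" "le (meet x y) y"
  using le_meet_iff[OF assms meet_proj[OF assms]] proj_le_refl[OF meet_proj[OF assms]] by blast+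

lemma carrier_annihilates_compression:
  assumes p: "p \<in> P" and a: "a \<in> A" and pa: "p * a = a * p" and e: "is_carrier a e"
  shows "e * (p * (1 - e) * p) = 0" "p * (1 - e) * p * e = 0"
proof -
  have eP: "e \<in> P" using e by (simp add: is_carrier_def)
  have b: "p * (1 - e) * p \<in> Pos"
    using sandwich_pos proj_pos p perp_proj[OF eP] by blast
  have "a * (p * (1 - e) * p) = p * (a * (1 - e)) * p"
    using pa by (metis mult.assoc)
  then have "a * (p * (1 - e) * p) = 0" using carrier_mult_perp[OF e] by simp
  then show "e * (p * (1 - e) * p) = 0"
    using e b pos_subset by (auto simp: is_carrier_def)
  then show "p * (1 - e) * p * e = 0"
    using sandwich_zero[OF proj_mem[OF eP] b] by (simp add: mult.assoc)
qed

lemma proj_commute_carrier: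
  assumes p: "p \<in> P" and a: "a \<in> A" and pa: "p * a = a * p" and e: "is_carrier a e"
  shows "p * e = e * p"
proof -
  have "(1 - p) * a = a * (1 - p)" using pa by (simp add: algebra_simps)
  note L = carrier_annihilates_compression[OF p a pa e]
    and R = carrier_annihilates_compression[OF perp_proj[OF p] a this e]
  have ee: "e * e = e" "e * (e * x) = e * x" for x
    using e proj_idem by (auto simp: is_carrier_def simp flip: mult.assoc)
  \<comment> \<open>e p (1 - e) and (1 - e) p e are differences of the two annihilated compressions\<close>
  have "e * p * (1 - e) = e * (p * (1 - e) * p) - e * ((1 - p) * (1 - e) * (1 - p))"
    by (simp add: algebra_simps ee)
  then have left: "e * p * (1 - e) = 0" using L R by simp
  have "(1 - e) * p * e = p * (1 - e) * p * e - (1 - p) * (1 - e) * (1 - p) * e"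
    by (simp add: algebra_simps ee)
  then have right: "(1 - e) * p * e = 0" using L R by simp
  from left right show ?thesis by (simp add: algebra_simps ee)
qed

lemma proj_commute_join:
  assumes p: "p \<in> P" and x: "x \<in> P" and y: "y \<in> P"
    and "p * x = x * p" "p * y = y * p"
  shows "p * join x y = join x y * p"
proof -
  obtain e where e: "is_carrier (x + y) e"
    using carrier_exists add_mem proj_mem x y by metis
  have "p * (x + y) = (x + y) * p" using assms by (simp add: algebra_simps)
  then show ?thesis
    using proj_commute_carrier[OF p add_mem[OF proj_mem[OF x] proj_mem[OF y]] _ e]
      join_eq_carrier[OF x y e] by simp
qed

lemma proj_commute_meet:
  assumes p: "p \<in> P" and x: "x \<in> P" and y: "y \<in> P"
    and "p * x = x * p" "p * y = y * p"
  shows "p * meet x y = meet x y * p"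
proof -
  have "p * (1 - x) = (1 - x) * p" "p * (1 - y) = (1 - y) * p"
    using assms by (simp_all add: algebra_simps)
  then have "p * join (1 - x) (1 - y) = join (1 - x) (1 - y) * p"
    using proj_commute_join p perp_proj x y by blast
  then show ?thesis by (simp add: meet_eq_perp_join[OF x y] algebra_simps)
qed

lemma join_orth:
  assumes x: "x \<in> P" and y: "y \<in> P" and xy: "x * y = 0"
  shows "join x y = x + y"
proof (rule join_eqI)
  have yx: "y * x = 0" using proj_orth_commute assms by blast
  show xyP: "x + y \<in> P" using proj_add_orth assms .
  show "le x (x + y)" "le y (x + y)"
    using proj_le_iff x y xyP proj_idem xy yx by (simp_all add: algebra_simps)
  fix s assume s: "s \<in> P" "le x s" "le y s"
  then have "x * s = x" "y * s = y" using proj_le_iff x y by blast+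
  then show "le (x + y) s" using proj_le_iff[OF xyP s(1)] by (simp add: algebra_simps)
qed

lemma meet_perp_orth:
  assumes "a \<in> P" "b \<in> P" "a * b = 0"
  shows "meet (1 - a) (1 - b) = 1 - (a + b)"
  using assms by (simp add: meet_eq_perp_join perp_proj join_orth)

lemma meet_commuting:
  assumes c: "c \<in> P" and x: "x \<in> P" and cx: "c * x = x * c"
  shows "meet c x = c * x"
proof (rule meet_eqI)
  show cxP: "c * x \<in> P" using proj_mult_commuting assms .
  show "le (c * x) c" "le (c * x) x"
    using proj_le_iff' proj_le_iff cxP c x proj_idem cx by (metis mult.assoc)+
  fix s assume s: "s \<in> P" "le s c" "le s x"
  then have "s * (c * x) = s" using proj_le_iff c x by (metis mult.assoc)
  then show "le s (c * x)" using proj_le_iff s(1) cxP by blast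
qed

lemma sa_orthosumI:
  assumes "set xs \<subseteq> P" "sorted_wrt (\<lambda>a b. a * b = 0) xs" "sum_list xs = x"
  shows "sa_orthosum Pos xs x"
  unfolding sa_orthosum_def
proof (intro conjI allI impI)
  fix i j assume ij: "i < length xs" "j < length xs" "i \<noteq> j"
  have P: "xs ! i \<in> P" "xs ! j \<in> P" using assms(1) ij nth_mem by blast+
  have "xs ! i * xs ! j = 0"
  proof (cases "i < j")
    case True
    then show ?thesis using assms(2) ij by (simp add: sorted_wrt_iff_nth_less)
  next
    case False
    then have "xs ! j * xs ! i = 0" using assms(2) ij by (simp add: sorted_wrt_iff_nth_less)
    then show ?thesis using proj_orth_commute P by blast
  qed
  then show "sa_orth Pos (xs ! i) (xs ! j)" using sa_orthI P by blast
qed (fact assms(3))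

definition commutator :: "'r \<Rightarrow> 'r \<Rightarrow> 'r" where
  "commutator p q = meet (meet (meet (join p q) (join p (1 - q))) (join (1 - p) q))
     (join (1 - p) (1 - q))"

lemma commutator_proj: "p \<in> P \<Longrightarrow> q \<in> P \<Longrightarrow> commutator p q \<in> P"
  by (simp add: commutator_def meet_proj join_proj perp_proj)

lemma le_commutator_iff:
  "p \<in> P \<Longrightarrow> q \<in> P \<Longrightarrow> s \<in> P \<Longrightarrow> le s (commutator p q) \<longleftrightarrow>
    le s (join p q) \<and> le s (join p (1 - q)) \<and> le s (join (1 - p) q) \<and> le s (join (1 - p) (1 - q))"
  by (simp add: commutator_def le_meet_iff meet_proj join_proj perp_proj)

lemma proj_commute_commutator:
  assumes p: "p \<in> P" and q: "q \<in> P" and x: "x \<in> P"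
    and "x * join p q = join p q * x" "x * join p (1 - q) = join p (1 - q) * x"
    "x * join (1 - p) q = join (1 - p) q * x" "x * join (1 - p) (1 - q) = join (1 - p) (1 - q) * x"
  shows "x * commutator p q = commutator p q * x"
  unfolding commutator_def
  using assms perp_proj[OF p] perp_proj[OF q]
  by (simp add: proj_commute_meet meet_proj join_proj)

lemma commutator_commute:
  assumes p: "p \<in> P" and q: "q \<in> P"
  shows "p * commutator p q = commutator p q * p" "q * commutator p q = commutator p q * q"
proof -
  note PP = p q perp_proj[OF p] perp_proj[OF q]
  have upper: "le x (join x y)" "le y (join x y)"
    and below: "x * join x y = join x y * x" "y * join x y = join x y * y"
    if "x \<in> P" "y \<in> P" for x y
    using join_lub[OF that] proj_commute_if_le[OF _ join_proj[OF that]] that by blast+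
  have perp_below: "x * join (1 - x) y = join (1 - x) y * x" "x * join y (1 - x) = join y (1 - x) * x"
    if "x \<in> P" "y \<in> P" for x y
    using upper[OF perp_proj[OF that(1)] that(2)] upper[OF that(2) perp_proj[OF that(1)]]
      proj_commute_if_perp_le[OF that(1)] join_proj perp_proj that by blast+
  show "p * commutator p q = commutator p q * p" "q * commutator p q = commutator p q * q"
    by (rule proj_commute_commutator; use PP below perp_below in simp)+
qed

lemma commutator_mult_eq:
  assumes p: "p \<in> P" and q: "q \<in> P"
  shows "meet (meet p (join (1 - p) q)) (join (1 - p) (1 - q)) = commutator p q * p"
    "meet (meet (1 - p) (join p q)) (join p (1 - q)) = commutator p q * (1 - p)"
    "meet (meet q (join p (1 - q))) (join (1 - p) (1 - q)) = commutator p q * q"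
    "meet (meet (1 - q) (join p q)) (join (1 - p) q) = commutator p q * (1 - q)"
proof -
  note PP = p q perp_proj[OF p] perp_proj[OF q]
  note c = commutator_proj[OF p q]
  have comm: "commutator p q * x = x * commutator p q" if "x \<in> {p, 1 - p, q, 1 - q}" for x
    using that commutator_commute[OF p q]
    by (elim insertE emptyE) (simp_all add: left_diff_distrib right_diff_distrib)
  have r: "meet (meet x u) v = commutator p q * x"
    if "x \<in> {p, 1 - p, q, 1 - q}" "u \<in> P" "v \<in> P"
      "\<And>s. s \<in> P \<Longrightarrow> le s (meet (meet x u) v) \<longleftrightarrow> le s (commutator p q) \<and> le s x" for x u v
  proof -
    have x: "x \<in> P" using that(1) PP by blast
    have "meet (meet x u) v = meet (commutator p q) x"
      using that x c by (intro proj_eqI) (simp_all add: meet_proj le_meet_iff)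
    then show ?thesis using meet_commuting[OF c x comm[OF that(1)]] by simp
  qed
  show "meet (meet p (join (1 - p) q)) (join (1 - p) (1 - q)) = commutator p q * p"
    "meet (meet (1 - p) (join p q)) (join p (1 - q)) = commutator p q * (1 - p)"
    "meet (meet q (join p (1 - q))) (join (1 - p) (1 - q)) = commutator p q * q"
    "meet (meet (1 - q) (join p q)) (join (1 - p) q) = commutator p q * (1 - q)"
    by (rule r; use PP in \<open>auto simp: join_proj meet_proj le_meet_iff le_commutator_iff
        intro: le_joinI1 le_joinI2\<close>)+
qed

lemma meet_mult_zero_if_le_join:
  assumes x: "x \<in> P" and y: "y \<in> P" and s: "s \<in> P" and "le s (join (1 - x) (1 - y))"
  shows "meet x y * s = 0"
proof -
  have "join (1 - x) (1 - y) * s = s"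
    using assms proj_le_iff' join_proj perp_proj by blast
  then show ?thesis by (simp add: meet_eq_perp_join[OF x y] left_diff_distrib)
qed

lemma meets_commutator_orth:
  assumes p: "p \<in> P" and q: "q \<in> P"
  shows "sorted_wrt (\<lambda>a b. a * b = 0)
    [meet p q, meet p (1 - q), meet (1 - p) q, meet (1 - p) (1 - q), commutator p q]"
proof -
  note PP = p q perp_proj[OF p] perp_proj[OF q]
  have m1: "meet p q \<in> P" "le (meet p q) p" "le (meet p q) q"
    and m2: "meet p (1 - q) \<in> P" "le (meet p (1 - q)) p" "le (meet p (1 - q)) (1 - q)"
    and m3: "meet (1 - p) q \<in> P" "le (meet (1 - p) q) (1 - p)" "le (meet (1 - p) q) q"
    and m4: "meet (1 - p) (1 - q) \<in> P" "le (meet (1 - p) (1 - q)) (1 - p)"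
      "le (meet (1 - p) (1 - q)) (1 - q)"
    using PP meet_proj meet_lower by simp_all
  note c = commutator_proj[OF p q]
  have "le (commutator p q) (commutator p q)" using proj_le_refl[OF c] .
  then have "le (commutator p q) (join p q)" "le (commutator p q) (join p (1 - q))"
    "le (commutator p q) (join (1 - p) q)" "le (commutator p q) (join (1 - p) (1 - q))"
    using le_commutator_iff[OF p q c] by blast+
  then have "meet x y * commutator p q = 0" if "x \<in> {p, 1 - p}" "y \<in> {q, 1 - q}" for x y
    using that PP c by (auto intro: meet_mult_zero_if_le_join)
  moreover have "meet p q * meet p (1 - q) = 0" "meet p q * meet (1 - p) q = 0"
    "meet p q * meet (1 - p) (1 - q) = 0" "meet p (1 - q) * meet (1 - p) q = 0"
    "meet p (1 - q) * meet (1 - p) (1 - q) = 0" "meet (1 - p) q * meet (1 - p) (1 - q) = 0"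
    using proj_mult_zero_if_le_perp[OF m1(1) q m2(1) m1(3) m2(3)]
      proj_mult_zero_if_le_perp[OF m1(1) p m3(1) m1(2) m3(2)]
      proj_mult_zero_if_le_perp[OF m1(1) p m4(1) m1(2) m4(2)]
      proj_mult_zero_if_le_perp[OF m2(1) p m3(1) m2(2) m3(2)]
      proj_mult_zero_if_le_perp[OF m2(1) p m4(1) m2(2) m4(2)]
      proj_mult_zero_if_le_perp[OF m3(1) q m4(1) m3(3) m4(3)] .
  ultimately show ?thesis by simp
qed

lemma perp_commutator_eq_sum_meets:
  assumes p: "p \<in> P" and q: "q \<in> P"
  shows "1 - commutator p q = meet p q + meet p (1 - q) + meet (1 - p) q + meet (1 - p) (1 - q)"
proof -
  define m1 m2 m3 m4
    where "m1 = meet p q" and "m2 = meet p (1 - q)" and "m3 = meet (1 - p) q"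
      and "m4 = meet (1 - p) (1 - q)"
  have m: "m1 \<in> P" "m2 \<in> P" "m3 \<in> P" "m4 \<in> P"
    unfolding m1_def m2_def m3_def m4_def using p q perp_proj by (simp_all add: meet_proj)
  have "m1 * m2 = 0" "m1 * m3 = 0" "m1 * m4 = 0" "m2 * m3 = 0" "m2 * m4 = 0" "m3 * m4 = 0"
    using meets_commutator_orth[OF p q] by (simp_all add: m1_def m2_def m3_def m4_def)
  then have orth: "m4 * m3 = 0" "(m4 + m3) * m2 = 0" "(m4 + m3 + m2) * m1 = 0"
    using proj_orth_commute m by (simp_all add: distrib_right)
  have sums: "m4 + m3 \<in> P" "m4 + m3 + m2 \<in> P"
    using proj_add_orth[OF m(4) m(3) orth(1)] proj_add_orth[OF _ m(2) orth(2)] by blast+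
  have "commutator p q = meet (meet (meet (1 - m4) (1 - m3)) (1 - m2)) (1 - m1)"
    unfolding commutator_def m1_def m2_def m3_def m4_def
    using p q perp_proj by (simp add: join_eq_perp_meet)
  also have "\<dots> = 1 - (m4 + m3 + m2 + m1)"
    using meet_perp_orth m sums orth by simp
  finally show ?thesis by (simp add: m1_def m2_def m3_def m4_def algebra_simps)
qed

lemma commuting_proj_split:
  assumes c: "c \<in> P" and x: "x \<in> P" and cx: "x * c = c * x"
  shows "c * x \<in> P" "c * (1 - x) \<in> P" "c * x * (c * (1 - x)) = 0"
proof -
  show "c * x \<in> P" using proj_mult_commuting[OF c x] cx by simp
  show "c * (1 - x) \<in> P"
    using proj_mult_commuting[OF c perp_proj[OF x]] cx by (simp add: algebra_simps)
  have "c * x * (c * (1 - x)) = c * c * (x * (1 - x))"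
    using cx by (metis mult.assoc)
  then show "c * x * (c * (1 - x)) = 0"
    using proj_idem[OF x] by (simp add: algebra_simps)
qed

lemma commutator_split_orthosums:
  assumes p: "p \<in> P" and q: "q \<in> P" and x: "x \<in> P"
    and cx: "x * commutator p q = commutator p q * x"
  defines "c \<equiv> commutator p q"
  shows "sa_orth Pos (c * x) (c * (1 - x))"
    "sa_orthosum Pos [meet p q, meet p (1 - q), meet (1 - p) q, meet (1 - p) (1 - q),
       c * x, c * (1 - x)] 1"
    "sa_orthosum Pos [1 - c, c * x, c * (1 - x)] 1"
    "sa_orthosum Pos [c * x, c * (1 - x)] c"
proof -
  have cP: "c \<in> P" using commutator_proj[OF p q] by (simp add: c_def)
  note split = commuting_proj_split[OF cP x cx[folded c_def]]
  have split_sum: "c * x + c * (1 - x) = c" by (simp add: algebra_simps)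
  have meets: "meet p q \<in> P" "meet p (1 - q) \<in> P" "meet (1 - p) q \<in> P" "meet (1 - p) (1 - q) \<in> P"
    using p q perp_proj by (simp_all add: meet_proj)
  have "m * (c * y) = 0" if "m * c = 0" for m y
    using that by (simp flip: mult.assoc)
  then have "sorted_wrt (\<lambda>a b. a * b = 0)
      [meet p q, meet p (1 - q), meet (1 - p) q, meet (1 - p) (1 - q), c * x, c * (1 - x)]"
    using meets_commutator_orth[OF p q, folded c_def] split(3) by simp
  moreover have "meet p q + meet p (1 - q) + meet (1 - p) q + meet (1 - p) (1 - q) + c = 1"
    using perp_commutator_eq_sum_meets[OF p q] by (simp add: c_def algebra_simps)
  then have "sum_list [meet p q, meet p (1 - q), meet (1 - p) q, meet (1 - p) (1 - q),
      c * x, c * (1 - x)] = 1"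
    using split_sum by (simp add: add.assoc)
  ultimately show "sa_orthosum Pos [meet p q, meet p (1 - q), meet (1 - p) q, meet (1 - p) (1 - q),
       c * x, c * (1 - x)] 1"
    using meets split by (intro sa_orthosumI) simp_all
  have "(1 - c) * (c * y) = 0" for y
    using proj_idem[OF cP] by (simp add: left_diff_distrib flip: mult.assoc)
  then show "sa_orthosum Pos [1 - c, c * x, c * (1 - x)] 1"
    using split split_sum perp_proj[OF cP] by (intro sa_orthosumI) (simp_all add: add.assoc)
  show "sa_orthosum Pos [c * x, c * (1 - x)] c"
    using split split_sum by (intro sa_orthosumI) simp_all
  show "sa_orth Pos (c * x) (c * (1 - x))" using sa_orthI split by blast
qed

end

theorem theorem3p6:
  fixes A Pos :: "'r::real_algebra_1 set" and p q :: 'r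
  assumes SA: "synaptic_algebra A Pos"
    and hp: "p \<in> sa_proj A" and hq: "q \<in> sa_proj A"
  defines "meet \<equiv> sa_meet A Pos" and "join \<equiv> sa_join A Pos"
  defines "rp \<equiv> meet (meet p (join (sa_perp p) q)) (join (sa_perp p) (sa_perp q))"
    and "rpp \<equiv> meet (meet (sa_perp p) (join p q)) (join p (sa_perp q))"
    and "rq \<equiv> meet (meet q (join p (sa_perp q))) (join (sa_perp p) (sa_perp q))"
    and "rqp \<equiv> meet (meet (sa_perp q) (join p q)) (join (sa_perp p) q)"
    and "com \<equiv> meet (meet (meet (join p q) (join p (sa_perp q))) (join (sa_perp p) q))
                 (join (sa_perp p) (sa_perp q))"
  shows "(sa_orth Pos rp rpp \<and> sa_orth Pos rq rqp)
    \<and> (sa_orthosum Pos [meet p q, meet p (sa_perp q), meet (sa_perp p) q,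
          meet (sa_perp p) (sa_perp q), rp, rpp] 1
       \<and> sa_orthosum Pos [sa_perp com, rp, rpp] 1)
    \<and> (sa_orthosum Pos [meet p q, meet p (sa_perp q), meet (sa_perp p) q,
          meet (sa_perp p) (sa_perp q), rq, rqp] 1
       \<and> sa_orthosum Pos [sa_perp com, rq, rqp] 1)
    \<and> (sa_orthosum Pos [rp, rpp] com \<and> sa_orthosum Pos [rq, rqp] com)"
proof -
  interpret synaptic A Pos using SA by (rule synaptic.intro)
  have com: "com = commutator p q"
    by (simp add: com_def meet_def join_def commutator_def sa_perp_def)
  have r: "rp = commutator p q * p" "rpp = commutator p q * (1 - p)"
    "rq = commutator p q * q" "rqp = commutator p q * (1 - q)"
    using commutator_mult_eq[OF hp hq]
    by (simp_all add: rp_def rpp_def rq_def rqp_def meet_def join_def sa_perp_def)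
  note split_p = commutator_split_orthosums[OF hp hq hp commutator_commute(1)[OF hp hq]]
    and split_q = commutator_split_orthosums[OF hp hq hq commutator_commute(2)[OF hp hq]]
  show ?thesis
    unfolding com r meet_def sa_perp_def using split_p split_q by simp
qed

end
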